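(* Let $(M,d)$ be a compact metric space and $\varphi:M\to M$ continuous. For all $\mathbb P\in\mathcal P_\varphi(M)$ and $\mathcal G=\{G_n\}\in\mathcal A(M)$, the limit $\mathcal G(\mathbb P)=\lim_{n\to\infty}n^{-1}\int G_n\,d\mathbb P$ exists and is finite, and for any approximating sequence $\{G^{(k)}\}$ of $\mathcal G$, $\mathcal G(\mathbb P)=\lim_{k\to\infty}\int G^{(k)}d\mathbb P$. Both convergences are uniform in $\mathbb P\in\mathcal P_\varphi(M)$, and $\mathbb P\mapsto\mathcal G(\mathbb P)$ is continuous on $\mathcal P_\varphi(M)$ with the weak topology.
   Context: $C(M),B(M)$: continuous/bounded Borel real functions with sup norm; $\mathcal P_\varphi(M)$: $\varphi$-invariant Borel probability measures; $S_nG=\sum_{k<n}G\circ\varphi^k$. $\mathcal A(M)$ is the set of $\{G_n\}\subset B(M)$ for which there is $\{G^{(k)}\}\subset C(M)$ (an approximating sequence) with $\lim_k\limsup_nn^{-1}\|G_n-S_nG^{(k)}\|_\infty=0$. *)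

theory Defs
  imports "HOL-Probability.Probability"
begin

definition supnorm :: "'a set \<Rightarrow> ('a \<Rightarrow> real) \<Rightarrow> real" where
  "supnorm M f = (SUP x\<in>M. \<bar>f x\<bar>)"

definition birkhoff_sum :: "('a \<Rightarrow> 'a) \<Rightarrow> nat \<Rightarrow> ('a \<Rightarrow> real) \<Rightarrow> 'a \<Rightarrow> real" where
  "birkhoff_sum \<phi> n G x = (\<Sum>k<n. G ((\<phi> ^^ k) x))"

definition bounded_borel :: "'a::metric_space set \<Rightarrow> ('a \<Rightarrow> real) set" where
  "bounded_borel M = {f. f \<in> borel_measurable (restrict_space borel M) \<and> bounded (f ` M)}"

definition approx_seq :: "'a::metric_space set \<Rightarrow> ('a \<Rightarrow> 'a) \<Rightarrow> (nat \<Rightarrow> 'a \<Rightarrow> real)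
    \<Rightarrow> (nat \<Rightarrow> 'a \<Rightarrow> real) \<Rightarrow> bool" where
  "approx_seq M \<phi> G Gk \<longleftrightarrow> (\<forall>k. continuous_on M (Gk k)) \<and>
     (\<lambda>k. limsup (\<lambda>n. ereal (supnorm M (\<lambda>x. G n x - birkhoff_sum \<phi> n (Gk k) x) / real n)))
       \<longlonglongrightarrow> 0"

definition class_A :: "'a::metric_space set \<Rightarrow> ('a \<Rightarrow> 'a) \<Rightarrow> (nat \<Rightarrow> 'a \<Rightarrow> real) set" where
  "class_A M \<phi> = {G. (\<forall>n. G n \<in> bounded_borel M) \<and> (\<exists>Gk. approx_seq M \<phi> G Gk)}"

definition borel_prob_measures :: "'a::metric_space set \<Rightarrow> 'a measure set" where
  "borel_prob_measures M = {P. prob_space P \<and> sets P = sets (restrict_space borel M)}"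

definition invariant_measures :: "'a::metric_space set \<Rightarrow> ('a \<Rightarrow> 'a) \<Rightarrow> 'a measure set" where
  "invariant_measures M \<phi> = {P \<in> borel_prob_measures M.
      \<forall>A\<in>sets P. emeasure P (\<phi> -` A \<inter> space P) = emeasure P A}"

definition weak_topology_meas :: "'a::metric_space set \<Rightarrow> 'a measure topology" where
  "weak_topology_meas M = topology_generated_by
     {{P. (\<integral>x. f x \<partial>P) \<in> U} | (f :: 'a \<Rightarrow> real) U. continuous_on M f \<and> open U}"

end

theory Submission
  imports Defs
begin

text \<open>For an invariant measure P the integral of a Birkhoff sum S_n g is n times the
  integral of g, so the average of G_n over P is within sup |G_n - S_n G^(k)| / n of the
  integral of G^(k), uniformly in P. Hence these averages are uniformly Cauchy, their limit
  is also the uniform limit of the integrals of G^(k), and as a uniform limit of weakly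
  continuous functionals it is weakly continuous.\<close>

lemma borel_prob_measuresD:
  assumes "P \<in> borel_prob_measures M"
  shows "prob_space P" and "sets P = sets (restrict_space borel M)" and "space P = M"
proof -
  show "prob_space P" and sets: "sets P = sets (restrict_space borel M)"
    using assms by (auto simp: borel_prob_measures_def)
  show "space P = M"
    using sets_eq_imp_space_eq[OF sets] by (simp add: space_restrict_space)
qed

lemma invariant_measures_borel_prob:
  "P \<in> invariant_measures M \<phi> \<Longrightarrow> P \<in> borel_prob_measures M"
  by (simp add: invariant_measures_def)

lemma continuous_in_bounded_borel:
  assumes "compact M" and "continuous_on M f"
  shows "f \<in> bounded_borel M"
  using assms borel_measurable_continuous_on_restrict compact_continuous_image compact_imp_bounded
  by (fastforce simp: bounded_borel_def)

lemma integrable_bounded_borel: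
  assumes P: "P \<in> borel_prob_measures M" and f: "f \<in> bounded_borel M"
  shows "integrable P f"
proof -
  interpret prob_space P using borel_prob_measuresD(1)[OF P] .
  obtain B where "\<And>x. x \<in> M \<Longrightarrow> \<bar>f x\<bar> \<le> B"
    using f by (auto simp: bounded_borel_def bounded_iff)
  moreover have "f \<in> borel_measurable P"
    using f
    by (simp add: bounded_borel_def measurable_cong_sets[OF borel_prob_measuresD(2)[OF P] refl])
  ultimately show ?thesis
    by (intro integrable_const_bound[where B=B]) (auto simp: borel_prob_measuresD(3)[OF P])
qed

lemma abs_integral_le_supnorm:
  assumes P: "P \<in> borel_prob_measures M" and f: "f \<in> bounded_borel M"
  shows "\<bar>\<integral>x. f x \<partial>P\<bar> \<le> supnorm M f"
proof -
  interpret prob_space P using borel_prob_measuresD(1)[OF P] .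
  have "bdd_above ((\<lambda>x. \<bar>f x\<bar>) ` M)"
    using f by (auto simp: bounded_borel_def bounded_iff bdd_above_def)
  then have le: "\<And>x. x \<in> M \<Longrightarrow> \<bar>f x\<bar> \<le> supnorm M f"
    unfolding supnorm_def by (rule cSUP_upper2) auto
  have "\<bar>\<integral>x. f x \<partial>P\<bar> \<le> (\<integral>x. \<bar>f x\<bar> \<partial>P)"
    by (rule integral_abs_bound)
  also have "\<dots> \<le> (\<integral>x. supnorm M f \<partial>P)"
    using integrable_bounded_borel[OF P f] le
    by (intro integral_mono) (auto simp: borel_prob_measuresD(3)[OF P])
  finally show ?thesis
    by (simp add: prob_space)
qed

lemma measurable_restrict_borel_selfmap:
  assumes "continuous_on M \<phi>" and "\<phi> ` M \<subseteq> M"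
  shows "\<phi> \<in> measurable (restrict_space borel M) (restrict_space borel M)"
  using assms borel_measurable_continuous_on_restrict
  by (intro measurable_restrict_space2) (auto simp: space_restrict_space)

lemma continuous_on_comp_funpow:
  assumes "continuous_on M \<phi>" and "\<phi> ` M \<subseteq> M" and "continuous_on M g"
  shows "continuous_on M (\<lambda>x. g ((\<phi> ^^ j) x))"
proof -
  have "continuous_on M (\<phi> ^^ j) \<and> (\<phi> ^^ j) ` M \<subseteq> M"
    by (induction j) (use assms in \<open>auto intro: continuous_on_compose2[of M \<phi> M]\<close>)
  then show ?thesis
    using assms(3) by (auto intro: continuous_on_compose2[of M g M])
qed

lemma continuous_on_birkhoff_sum:
  assumes "continuous_on M \<phi>" and "\<phi> ` M \<subseteq> M" and "continuous_on M g"
  shows "continuous_on M (birkhoff_sum \<phi> n g)"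
  unfolding birkhoff_sum_def[abs_def]
  using continuous_on_comp_funpow[OF assms] by (intro continuous_on_sum) auto

lemma integral_comp_invariant:
  fixes g :: "'a::metric_space \<Rightarrow> 'b::{banach, second_countable_topology}"
  assumes P: "P \<in> invariant_measures M \<phi>"
    and \<phi>: "\<phi> \<in> measurable (restrict_space borel M) (restrict_space borel M)"
    and g: "g \<in> borel_measurable (restrict_space borel M)"
  shows "(\<integral>x. g (\<phi> x) \<partial>P) = (\<integral>x. g x \<partial>P)"
proof -
  have sets: "sets P = sets (restrict_space borel M)"
    using borel_prob_measuresD(2)[OF invariant_measures_borel_prob[OF P]] .
  have \<phi>P: "\<phi> \<in> measurable P P"
    using \<phi> by (simp add: measurable_cong_sets[OF sets sets])
  have invariant: "distr P P \<phi> = P"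
    by (rule measure_eqI) (use P \<phi>P in \<open>auto simp: emeasure_distr invariant_measures_def\<close>)
  have "g \<in> borel_measurable P"
    using g by (simp add: measurable_cong_sets[OF sets refl])
  then have "integral\<^sup>L (distr P P \<phi>) g = (\<integral>x. g (\<phi> x) \<partial>P)"
    by (rule integral_distr[OF \<phi>P])
  then show ?thesis
    by (simp only: invariant)
qed

lemma integral_comp_funpow_invariant:
  fixes g :: "'a::metric_space \<Rightarrow> 'b::{banach, second_countable_topology}"
  assumes P: "P \<in> invariant_measures M \<phi>"
    and \<phi>: "\<phi> \<in> measurable (restrict_space borel M) (restrict_space borel M)"
    and g: "g \<in> borel_measurable (restrict_space borel M)"
  shows "(\<integral>x. g ((\<phi> ^^ j) x) \<partial>P) = (\<integral>x. g x \<partial>P)"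
  using g
proof (induction j arbitrary: g)
  case (Suc j)
  have "(\<integral>x. g ((\<phi> ^^ Suc j) x) \<partial>P) = (\<integral>x. (g \<circ> \<phi>) ((\<phi> ^^ j) x) \<partial>P)"
    by simp
  also have "\<dots> = (\<integral>x. g (\<phi> x) \<partial>P)"
    using Suc.IH[of "g \<circ> \<phi>"] measurable_comp[OF \<phi> Suc.prems] by (simp add: comp_def)
  also have "\<dots> = (\<integral>x. g x \<partial>P)"
    by (rule integral_comp_invariant[OF P \<phi> Suc.prems])
  finally show ?case .
qed simp

lemma integral_birkhoff_sum_invariant:
  assumes P: "P \<in> invariant_measures M \<phi>" and "compact M"
    and "continuous_on M \<phi>" and "\<phi> ` M \<subseteq> M" and g: "continuous_on M g"
  shows "(\<integral>x. birkhoff_sum \<phi> n g x \<partial>P) = real n * (\<integral>x. g x \<partial>P)"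
proof -
  have P': "P \<in> borel_prob_measures M"
    using invariant_measures_borel_prob[OF P] .
  have "integrable P (\<lambda>x. g ((\<phi> ^^ j) x))" for j
    using continuous_on_comp_funpow[OF assms(3,4) g]
    by (intro integrable_bounded_borel[OF P' continuous_in_bounded_borel[OF \<open>compact M\<close>]])
  then have "(\<integral>x. birkhoff_sum \<phi> n g x \<partial>P) = (\<Sum>j<n. \<integral>x. g ((\<phi> ^^ j) x) \<partial>P)"
    unfolding birkhoff_sum_def by (simp add: integral_sum)
  also have "\<dots> = (\<Sum>j<n. \<integral>x. g x \<partial>P)"
    using integral_comp_funpow_invariant[OF P measurable_restrict_borel_selfmap[OF assms(3,4)]
        borel_measurable_continuous_on_restrict[OF g]]
    by simp
  finally show ?thesis
    by simp
qed

lemma abs_average_integral_diff_le: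
  assumes P: "P \<in> invariant_measures M \<phi>" and cM: "compact M"
    and \<phi>: "continuous_on M \<phi>" "\<phi> ` M \<subseteq> M"
    and F: "F \<in> bounded_borel M" and g: "continuous_on M g" and n: "n > 0"
  shows "\<bar>(\<integral>x. F x \<partial>P) / real n - (\<integral>x. g x \<partial>P)\<bar>
    \<le> supnorm M (\<lambda>x. F x - birkhoff_sum \<phi> n g x) / real n"
proof -
  have P': "P \<in> borel_prob_measures M"
    using invariant_measures_borel_prob[OF P] .
  have S: "birkhoff_sum \<phi> n g \<in> bounded_borel M"
    by (rule continuous_in_bounded_borel[OF cM continuous_on_birkhoff_sum[OF \<phi> g]])
  have diff: "(\<lambda>x. F x - birkhoff_sum \<phi> n g x) \<in> bounded_borel M"
    using F S by (auto simp: bounded_borel_def intro: bounded_minus_comp)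
  have "(\<integral>x. F x - birkhoff_sum \<phi> n g x \<partial>P) = (\<integral>x. F x \<partial>P) - real n * (\<integral>x. g x \<partial>P)"
    using integrable_bounded_borel[OF P'] F S integral_birkhoff_sum_invariant[OF P cM \<phi> g]
    by simp
  then have "(\<integral>x. F x \<partial>P) / real n - (\<integral>x. g x \<partial>P)
      = (\<integral>x. F x - birkhoff_sum \<phi> n g x \<partial>P) / real n"
    using n by (simp add: field_simps)
  then show ?thesis
    using abs_integral_le_supnorm[OF P' diff] n by (simp add: divide_right_mono)
qed

lemma approx_seq_eventually_less:
  assumes "approx_seq M \<phi> G Gk" and "e > 0"
  shows "\<exists>K. \<forall>k\<ge>K. \<exists>N. \<forall>n\<ge>N. supnorm M (\<lambda>x. G n x - birkhoff_sum \<phi> n (Gk k) x) / real n < e"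
proof -
  have "\<forall>\<^sub>F k in sequentially.
      limsup (\<lambda>n. ereal (supnorm M (\<lambda>x. G n x - birkhoff_sum \<phi> n (Gk k) x) / real n)) < ereal e"
    using assms by (intro order_tendstoD(2)) (auto simp: approx_seq_def)
  then have "\<forall>\<^sub>F k in sequentially. \<forall>\<^sub>F n in sequentially.
      supnorm M (\<lambda>x. G n x - birkhoff_sum \<phi> n (Gk k) x) / real n < e"
    by (rule eventually_mono) (auto dest!: Limsup_lessD)
  then show ?thesis
    by (simp add: eventually_sequentially)
qed

lemma approx_seq_integrals_close:
  assumes cM: "compact M" and \<phi>: "continuous_on M \<phi>" "\<phi> ` M \<subseteq> M"
    and G: "\<And>n. G n \<in> bounded_borel M" and Gk: "approx_seq M \<phi> G Gk" and e: "e > 0"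
  shows "\<exists>K. \<forall>k\<ge>K. \<exists>N. \<forall>n\<ge>N. \<forall>P\<in>invariant_measures M \<phi>.
    dist ((\<integral>x. G n x \<partial>P) / real n) (\<integral>x. Gk k x \<partial>P) < e"
proof -
  obtain K where K: "\<forall>k\<ge>K. \<exists>N. \<forall>n\<ge>N.
      supnorm M (\<lambda>x. G n x - birkhoff_sum \<phi> n (Gk k) x) / real n < e"
    using approx_seq_eventually_less[OF Gk e] by blast
  have "\<exists>N. \<forall>n\<ge>N. \<forall>P\<in>invariant_measures M \<phi>.
      dist ((\<integral>x. G n x \<partial>P) / real n) (\<integral>x. Gk k x \<partial>P) < e" if "k \<ge> K" for k
  proof -
    obtain N where N: "\<forall>n\<ge>N. supnorm M (\<lambda>x. G n x - birkhoff_sum \<phi> n (Gk k) x) / real n < e"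
      using K \<open>k \<ge> K\<close> by blast
    have "continuous_on M (Gk k)"
      using Gk by (simp add: approx_seq_def)
    have "dist ((\<integral>x. G n x \<partial>P) / real n) (\<integral>x. Gk k x \<partial>P) < e"
      if "n \<ge> max N 1" and P: "P \<in> invariant_measures M \<phi>" for n P
    proof -
      have "dist ((\<integral>x. G n x \<partial>P) / real n) (\<integral>x. Gk k x \<partial>P)
          \<le> supnorm M (\<lambda>x. G n x - birkhoff_sum \<phi> n (Gk k) x) / real n"
        unfolding dist_real_def
        using that
        by (intro abs_average_integral_diff_le[OF P cM \<phi> G \<open>continuous_on M (Gk k)\<close>]) simp
      also have "\<dots> < e"
        using N that by simp
      finally show ?thesis .
    qed
    then show ?thesis
      by blast
  qed
  then show ?thesis
    by blast
qed

lemma uniform_limits_of_close_sequences: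
  fixes a b :: "nat \<Rightarrow> 'a \<Rightarrow> 'b::complete_space"
  assumes close: "\<And>e. e > 0 \<Longrightarrow> \<exists>K. \<forall>k\<ge>K. \<exists>N. \<forall>n\<ge>N. \<forall>x\<in>X. dist (a n x) (b k x) < e"
  defines "L \<equiv> \<lambda>x. lim (\<lambda>n. a n x)"
  shows "uniform_limit X a L sequentially" and "uniform_limit X b L sequentially"
proof -
  have "uniformly_Cauchy_on X a"
    unfolding uniformly_Cauchy_on_def
  proof (intro allI impI)
    fix e :: real assume "e > 0"
    then obtain K where K: "\<forall>k\<ge>K. \<exists>N. \<forall>n\<ge>N. \<forall>x\<in>X. dist (a n x) (b k x) < e / 2"
      using close[OF half_gt_zero] by blast
    obtain N where N: "\<forall>n\<ge>N. \<forall>x\<in>X. dist (a n x) (b K x) < e / 2"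
      using mp[OF spec[OF K, of K] order_refl] by blast
    have "dist (a m x) (a n x) < e" if "x \<in> X" "m \<ge> N" "n \<ge> N" for x m n
      using dist_triangle_half_l[OF N[rule_format, OF that(2,1)] N[rule_format, OF that(3,1)]] .
    then show "\<exists>N. \<forall>x\<in>X. \<forall>m\<ge>N. \<forall>n\<ge>N. dist (a m x) (a n x) < e"
      by blast
  qed
  then obtain l where l: "uniform_limit X a l sequentially"
    using Cauchy_uniformly_convergent uniformly_convergent_on_def by blast
  have "l x = L x" if "x \<in> X" for x
    unfolding L_def by (rule limI[symmetric]) (rule tendsto_uniform_limitI[OF l that])
  then show aL: "uniform_limit X a L sequentially"
    using l by (subst uniform_limit_cong'[where g = a and h = L and i = l]) auto
  show "uniform_limit X b L sequentially"
    unfolding uniform_limit_sequentially_iff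
  proof (intro allI impI)
    fix e :: real assume "e > 0"
    then obtain N1 where N1: "\<forall>n\<ge>N1. \<forall>x\<in>X. dist (a n x) (L x) < e / 2"
      using aL[unfolded uniform_limit_sequentially_iff, rule_format, OF half_gt_zero] \<open>e > 0\<close>
      by blast
    obtain K where K: "\<forall>k\<ge>K. \<exists>N. \<forall>n\<ge>N. \<forall>x\<in>X. dist (a n x) (b k x) < e / 2"
      using close[OF half_gt_zero[OF \<open>e > 0\<close>]] by blast
    have "dist (b k x) (L x) < e" if "k \<ge> K" and x: "x \<in> X" for k x
    proof -
      obtain N2 where N2: "\<forall>n\<ge>N2. \<forall>x\<in>X. dist (a n x) (b k x) < e / 2"
        using mp[OF spec[OF K, of k] \<open>k \<ge> K\<close>] by blast
      show ?thesis
        using dist_triangle_half_r[OF N2[rule_format, OF max.cobounded2 x]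
            N1[rule_format, OF max.cobounded1 x]] .
    qed
    then show "\<exists>K. \<forall>k\<ge>K. \<forall>x\<in>X. dist (b k x) (L x) < e"
      by blast
  qed
qed

lemma continuous_map_weak_integral:
  assumes "continuous_on M f"
  shows "continuous_map (weak_topology_meas M) euclideanreal (\<lambda>P. \<integral>x. f x \<partial>P)"
proof -
  define S :: "'a measure set set" where
    "S = {{P. (\<integral>x. f x \<partial>P) \<in> U} | (f :: 'a \<Rightarrow> real) U. continuous_on M f \<and> open U}"
  have weak: "weak_topology_meas M = topology_generated_by S"
    unfolding S_def weak_topology_meas_def ..
  have "UNIV \<in> S"
    unfolding S_def by (auto intro!: exI[of _ "\<lambda>_. 0"] exI[of _ UNIV])
  then have "topspace (weak_topology_meas M) = UNIV"
    unfolding weak by auto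
  moreover have "openin (weak_topology_meas M) {P. (\<integral>x. f x \<partial>P) \<in> U}" if "open U" for U
    unfolding weak openin_topology_generated_by_iff
    by (rule generate_topology_on.Basis) (use assms that in \<open>auto simp: S_def\<close>)
  ultimately show ?thesis
    by (simp add: continuous_map_def)
qed

lemma continuous_map_uniform_limit_weak_integrals:
  assumes "\<And>k. continuous_on M (f k)"
    and "uniform_limit I (\<lambda>k P. \<integral>x. f k x \<partial>P) L sequentially"
  shows "continuous_map (subtopology (weak_topology_meas M) I) euclideanreal L"
proof -
  have "continuous_map (subtopology (weak_topology_meas M) I) Met_TC.mtopology L"
  proof (rule Met_TC.continuous_map_uniform_limit_alt[where f = "\<lambda>k P. \<integral>x. f k x \<partial>P"])
    show "\<forall>\<^sub>F k in sequentially.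
        continuous_map (subtopology (weak_topology_meas M) I) Met_TC.mtopology (\<lambda>P. \<integral>x. f k x \<partial>P)"
      using assms(1) by (simp add: continuous_map_from_subtopology continuous_map_weak_integral)
    show "\<forall>\<^sub>F k in sequentially. \<forall>P\<in>topspace (subtopology (weak_topology_meas M) I).
        dist (\<integral>x. f k x \<partial>P) (L P) < e" if "e > 0" for e
    proof -
      have "\<forall>\<^sub>F k in sequentially. \<forall>P\<in>I. dist (\<integral>x. f k x \<partial>P) (L P) < e"
        using assms(2) that by (simp add: uniform_limit_iff)
      then show ?thesis
        by (rule eventually_mono) simp
    qed
  qed simp_all
  then show ?thesis
    by simp
qed

lemma uniform_limits_approx_seq:
  assumes "compact M" and "continuous_on M \<phi>" and "\<phi> ` M \<subseteq> M"
    and "\<And>n. G n \<in> bounded_borel M" and "approx_seq M \<phi> G Gk"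
  defines "L \<equiv> \<lambda>P. lim (\<lambda>n. (\<integral>x. G n x \<partial>P) / real n)"
  shows "uniform_limit (invariant_measures M \<phi>) (\<lambda>n P. (\<integral>x. G n x \<partial>P) / real n) L sequentially"
    and "uniform_limit (invariant_measures M \<phi>) (\<lambda>k P. \<integral>x. Gk k x \<partial>P) L sequentially"
  using uniform_limits_of_close_sequences[where a = "\<lambda>n P. (\<integral>x. G n x \<partial>P) / real n"
      and b = "\<lambda>k P. \<integral>x. Gk k x \<partial>P", OF approx_seq_integrals_close[OF assms(1-5)]]
  unfolding L_def by blast+

theorem lemma2p3:
  fixes M :: "'a::metric_space set" and \<phi> :: "'a \<Rightarrow> 'a" and G :: "nat \<Rightarrow> 'a \<Rightarrow> real"
  assumes "compact M" and "continuous_on M \<phi>" and "\<phi> ` M \<subseteq> M"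
    and "G \<in> class_A M \<phi>"
  defines "GP \<equiv> (\<lambda>P. lim (\<lambda>n. (\<integral>x. G n x \<partial>P) / real n))"
  shows "(\<forall>P\<in>invariant_measures M \<phi>. (\<lambda>n. (\<integral>x. G n x \<partial>P) / real n) \<longlonglongrightarrow> GP P)
    \<and> (\<forall>e>0. \<exists>N. \<forall>n\<ge>N. \<forall>P\<in>invariant_measures M \<phi>.
          \<bar>(\<integral>x. G n x \<partial>P) / real n - GP P\<bar> < e)
    \<and> (\<forall>Gk. approx_seq M \<phi> G Gk \<longrightarrow>
          (\<forall>P\<in>invariant_measures M \<phi>. (\<lambda>k. \<integral>x. Gk k x \<partial>P) \<longlonglongrightarrow> GP P)
        \<and> (\<forall>e>0. \<exists>K. \<forall>k\<ge>K. \<forall>P\<in>invariant_measures M \<phi>.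
          \<bar>(\<integral>x. Gk k x \<partial>P) - GP P\<bar> < e))
    \<and> continuous_map (subtopology (weak_topology_meas M) (invariant_measures M \<phi>)) euclideanreal GP"
proof -
  let ?I = "invariant_measures M \<phi>"
  obtain Gk0 where G: "\<And>n. G n \<in> bounded_borel M" and Gk0: "approx_seq M \<phi> G Gk0"
    using assms(4) by (auto simp: class_A_def)
  have averages: "uniform_limit ?I (\<lambda>n P. (\<integral>x. G n x \<partial>P) / real n) GP sequentially"
    unfolding GP_def by (rule uniform_limits_approx_seq(1)[OF assms(1-3) G Gk0])
  have integrals: "uniform_limit ?I (\<lambda>k P. \<integral>x. Gk k x \<partial>P) GP sequentially"
    if "approx_seq M \<phi> G Gk" for Gk
    unfolding GP_def by (rule uniform_limits_approx_seq(2)[OF assms(1-3) G that])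
  have "continuous_map (subtopology (weak_topology_meas M) ?I) euclideanreal GP"
    using Gk0 by (intro continuous_map_uniform_limit_weak_integrals[OF _ integrals[OF Gk0]])
      (simp add: approx_seq_def)
  moreover have "\<forall>P\<in>?I. (\<lambda>n. (\<integral>x. G n x \<partial>P) / real n) \<longlonglongrightarrow> GP P"
    using tendsto_uniform_limitI[OF averages] by blast
  moreover have "\<forall>P\<in>?I. (\<lambda>k. \<integral>x. Gk k x \<partial>P) \<longlonglongrightarrow> GP P" if "approx_seq M \<phi> G Gk" for Gk
    using tendsto_uniform_limitI[OF integrals[OF that]] by blast
  ultimately show ?thesis
    using averages integrals by (simp add: uniform_limit_sequentially_iff dist_real_def)
qed

end
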